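(* Let $G$ be a connected graph in $\mathcal{C}$ and $C$ an induced $C_5$ in $G$. Then there is no edge between $R$ and $Y$.
   Context: $\mathcal{C}=\mathrm{Free}(\text{claw}, 4K_1, \text{5-wheel}, C_5\text{-twin}, P_5\text{-twin}, K_5-e)$, where $\mathrm{Free}(L)$ is the class of graphs with no induced subgraph isomorphic to a member of $L$; the claw is $K_{1,3}$; $4K_1$ is the edgeless graph on 4 vertices; the 5-wheel is $C_5$ plus a vertex adjacent to all five cycle vertices; the $C_5$-twin is $C_5$ plus a new vertex adjacent to one cycle vertex $v$ and both cycle-neighbours of $v$; the $P_5$-twin is a path $p_1p_2p_3p_4p_5$ plus a new vertex adjacent to exactly $p_2,p_3,p_4$; $K_5-e$ is $K_5$ minus one edge. Given an induced cycle $C$ of length 5 with vertices $0,\dots,4$ in cyclic order (indices taken mod 5): $R$ is the set of vertices outside $C$ with no neighbour in $C$; $X_j$ is the set of vertices outside $C$ whose neighbourhood in $C$ is exactly $\{j,j+1\}$; $Y_j$ is the set of vertices outside $C$ whose neighbourhood in $C$ is exactly $\{j,j+1,j+2,j+3\}$; $X=\bigcup_j X_j$, $Y=\bigcup_j Y_j$. *)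

theory Defs
  imports Main
begin

definition simple_graph :: "'a set \<Rightarrow> ('a \<Rightarrow> 'a \<Rightarrow> bool) \<Rightarrow> bool" where
  "simple_graph V E \<longleftrightarrow> finite V \<and> (\<forall>x y. E x y \<longrightarrow> x \<in> V \<and> y \<in> V)
     \<and> (\<forall>x y. E x y \<longrightarrow> E y x) \<and> (\<forall>x. \<not> E x x)"

definition connected_graph :: "'a set \<Rightarrow> ('a \<Rightarrow> 'a \<Rightarrow> bool) \<Rightarrow> bool" where
  "connected_graph V E \<longleftrightarrow> (\<forall>x\<in>V. \<forall>y\<in>V. E\<^sup>*\<^sup>* x y)"

definition pat :: "nat set set \<Rightarrow> nat \<Rightarrow> nat \<Rightarrow> bool" where
  "pat es i j \<longleftrightarrow> {i, j} \<in> es"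

definition has_induced :: "'a set \<Rightarrow> ('a \<Rightarrow> 'a \<Rightarrow> bool) \<Rightarrow> nat \<Rightarrow> (nat \<Rightarrow> nat \<Rightarrow> bool) \<Rightarrow> bool" where
  "has_induced V E n H \<longleftrightarrow> (\<exists>f. inj_on f {..<n} \<and> f ` {..<n} \<subseteq> V \<and>
       (\<forall>i<n. \<forall>j<n. E (f i) (f j) \<longleftrightarrow> H i j))"

definition c5_edges :: "nat set set" where
  "c5_edges = {{0,1},{1,2},{2,3},{3,4},{4,0}}"

definition claw_graph :: "nat \<Rightarrow> nat \<Rightarrow> bool" where
  "claw_graph = pat {{0,1},{0,2},{0,3}}"

definition fourK1_graph :: "nat \<Rightarrow> nat \<Rightarrow> bool" where
  "fourK1_graph = pat {}"

definition wheel5_graph :: "nat \<Rightarrow> nat \<Rightarrow> bool" where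
  "wheel5_graph = pat (c5_edges \<union> {{5,0},{5,1},{5,2},{5,3},{5,4}})"

definition c5twin_graph :: "nat \<Rightarrow> nat \<Rightarrow> bool" where
  "c5twin_graph = pat (c5_edges \<union> {{5,4},{5,0},{5,1}})"

definition p5twin_graph :: "nat \<Rightarrow> nat \<Rightarrow> bool" where
  "p5twin_graph = pat {{0,1},{1,2},{2,3},{3,4},{5,1},{5,2},{5,3}}"

text \<open>K5 - e: all pairs of 0..4 except {0,1}.\<close>
definition k5e_graph :: "nat \<Rightarrow> nat \<Rightarrow> bool" where
  "k5e_graph = pat {{0,2},{0,3},{0,4},{1,2},{1,3},{1,4},{2,3},{2,4},{3,4}}"

definition in_class_C :: "'a set \<Rightarrow> ('a \<Rightarrow> 'a \<Rightarrow> bool) \<Rightarrow> bool" where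
  "in_class_C V E \<longleftrightarrow> \<not> has_induced V E 4 claw_graph \<and> \<not> has_induced V E 4 fourK1_graph
     \<and> \<not> has_induced V E 6 wheel5_graph \<and> \<not> has_induced V E 6 c5twin_graph
     \<and> \<not> has_induced V E 6 p5twin_graph \<and> \<not> has_induced V E 5 k5e_graph"

definition induced_C5 :: "'a set \<Rightarrow> ('a \<Rightarrow> 'a \<Rightarrow> bool) \<Rightarrow> (nat \<Rightarrow> 'a) \<Rightarrow> bool" where
  "induced_C5 V E c \<longleftrightarrow> inj_on c {..<5} \<and> c ` {..<5} \<subseteq> V \<and>
     (\<forall>i<5. \<forall>j<5. E (c i) (c j) \<longleftrightarrow> (j = (i + 1) mod 5 \<or> i = (j + 1) mod 5))"

definition nbr_on_C :: "('a \<Rightarrow> 'a \<Rightarrow> bool) \<Rightarrow> (nat \<Rightarrow> 'a) \<Rightarrow> 'a \<Rightarrow> nat set" where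
  "nbr_on_C E c v = {i. i < 5 \<and> E v (c i)}"

definition R_set :: "'a set \<Rightarrow> ('a \<Rightarrow> 'a \<Rightarrow> bool) \<Rightarrow> (nat \<Rightarrow> 'a) \<Rightarrow> 'a set" where
  "R_set V E c = {v \<in> V - c ` {..<5}. nbr_on_C E c v = {}}"

definition Y_j :: "'a set \<Rightarrow> ('a \<Rightarrow> 'a \<Rightarrow> bool) \<Rightarrow> (nat \<Rightarrow> 'a) \<Rightarrow> nat \<Rightarrow> 'a set" where
  "Y_j V E c j = {v \<in> V - c ` {..<5}.
     nbr_on_C E c v = {j mod 5, (j + 1) mod 5, (j + 2) mod 5, (j + 3) mod 5}}"

definition Y_set :: "'a set \<Rightarrow> ('a \<Rightarrow> 'a \<Rightarrow> bool) \<Rightarrow> (nat \<Rightarrow> 'a) \<Rightarrow> 'a set" where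
  "Y_set V E c = (\<Union>j<5. Y_j V E c j)"

end

theory Submission
  imports Defs
begin

text \<open>A vertex of Y is adjacent to two cycle vertices at distance two, which are
  non-adjacent; a neighbour in R is adjacent to neither of them, so the three are
  the leaves of a claw centred at the Y-vertex.\<close>

lemma claw_graph_iff:
  "claw_graph i k \<longleftrightarrow> (i = 0 \<and> k \<in> {1,2,3}) \<or> (k = 0 \<and> i \<in> {1,2,3})"
  unfolding claw_graph_def pat_def by (auto simp: doubleton_eq_iff)

lemma claw_free_neighbours_adjacent:
  assumes "simple_graph V E" and "\<not> has_induced V E 4 claw_graph"
    and "E x u" "E x v" "E x w" and "u \<noteq> v" "u \<noteq> w" "v \<noteq> w"
  shows "E u v \<or> E u w \<or> E v w"
proof (rule ccontr)
  assume indep: "\<not> (E u v \<or> E u w \<or> E v w)"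
  have sym: "E p q \<Longrightarrow> E q p" and irrefl: "\<not> E p p" and inV: "E p q \<Longrightarrow> p \<in> V" for p q
    using assms(1) unfolding simple_graph_def by blast+
  have adj: "E x u" "E x v" "E x w" "E u x" "E v x" "E w x"
    "\<not> E u v" "\<not> E u w" "\<not> E v w" "\<not> E v u" "\<not> E w u" "\<not> E w v"
    "\<not> E x x" "\<not> E u u" "\<not> E v v" "\<not> E w w"
    using assms(3-5) indep sym[of x] sym[of u] sym[of v] sym[of w] irrefl by auto
  then have distinct: "x \<noteq> u" "x \<noteq> v" "x \<noteq> w" by auto
  define f where "f = (\<lambda>i::nat. if i = 0 then x else if i = 1 then u else if i = 2 then v else w)"
  have four: "{..<4::nat} = {0,1,2,3}" by auto
  have "has_induced V E 4 claw_graph"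
    unfolding has_induced_def
  proof (intro exI conjI)
    show "inj_on f {..<4}"
      using distinct assms(6-8) unfolding four inj_on_def f_def by auto
    show "f ` {..<4} \<subseteq> V"
      using adj inV unfolding four f_def by auto
    show "\<forall>i<4. \<forall>k<4. E (f i) (f k) = claw_graph i k"
    proof (intro allI impI)
      fix i k :: nat
      assume "i < 4" "k < 4"
      then have "i = 0 \<or> i = 1 \<or> i = 2 \<or> i = 3" "k = 0 \<or> k = 1 \<or> k = 2 \<or> k = 3" by auto
      then show "E (f i) (f k) = claw_graph i k"
        unfolding claw_graph_iff f_def using adj by (elim disjE) simp_all
    qed
  qed
  with assms(2) show False by blast
qed

lemma induced_C5_skip_nonadjacent:
  assumes "induced_C5 V E c" and "j < 5"
  shows "c (j mod 5) \<noteq> c ((j + 2) mod 5)" and "\<not> E (c (j mod 5)) (c ((j + 2) mod 5))"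
proof -
  have "j = 0 \<or> j = 1 \<or> j = 2 \<or> j = 3 \<or> j = 4" using \<open>j < 5\<close> by auto
  then have "j mod 5 \<noteq> (j + 2) mod 5"
    and skip: "\<not> ((j + 2) mod 5 = (j mod 5 + 1) mod 5 \<or> j mod 5 = ((j + 2) mod 5 + 1) mod 5)"
    by (elim disjE; simp)+
  have "inj_on c {..<5}"
    and "\<forall>i<5. \<forall>k<5. E (c i) (c k) \<longleftrightarrow> (k = (i + 1) mod 5 \<or> i = (k + 1) mod 5)"
    using assms(1) unfolding induced_C5_def by blast+
  with \<open>j mod 5 \<noteq> (j + 2) mod 5\<close> skip
  show "c (j mod 5) \<noteq> c ((j + 2) mod 5)" and "\<not> E (c (j mod 5)) (c ((j + 2) mod 5))"
    by (simp_all add: inj_on_eq_iff)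
qed

theorem claim9:
  fixes V :: "'a set" and E :: "'a \<Rightarrow> 'a \<Rightarrow> bool" and c :: "nat \<Rightarrow> 'a"
  assumes "simple_graph V E" and "connected_graph V E" and "in_class_C V E"
    and "induced_C5 V E c"
  shows "\<not> (\<exists>r\<in>R_set V E c. \<exists>y\<in>Y_set V E c. E r y)"
proof
  assume "\<exists>r\<in>R_set V E c. \<exists>y\<in>Y_set V E c. E r y"
  then obtain r y j where r: "r \<in> R_set V E c" and "j < 5" and y: "y \<in> Y_j V E c j"
    and "E r y" unfolding Y_set_def by blast
  let ?a = "c (j mod 5)" and ?b = "c ((j + 2) mod 5)"
  have sym: "\<And>p q. E p q \<Longrightarrow> E q p" using assms(1) unfolding simple_graph_def by blast
  have "nbr_on_C E c y = {j mod 5, (j + 1) mod 5, (j + 2) mod 5, (j + 3) mod 5}"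
    using y unfolding Y_j_def by blast
  then have "j mod 5 \<in> nbr_on_C E c y" "(j + 2) mod 5 \<in> nbr_on_C E c y" by simp_all
  then have y_ab: "E y ?a" "E y ?b" unfolding nbr_on_C_def by auto
  have "r \<notin> c ` {..<5}" and "\<forall>i<5. \<not> E r (c i)"
    using r unfolding R_set_def nbr_on_C_def by auto
  then have r_ab: "\<not> E r ?a" "\<not> E r ?b" "r \<noteq> ?a" "r \<noteq> ?b" by auto
  note ab = induced_C5_skip_nonadjacent[OF assms(4) \<open>j < 5\<close>]
  have "\<not> has_induced V E 4 claw_graph" using assms(3) unfolding in_class_C_def by blast
  from claw_free_neighbours_adjacent[OF assms(1) this sym[OF \<open>E r y\<close>] y_ab]
  show False using r_ab ab by simp
qed

end
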